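(* Let $M_1$ and $M_2$ be MUL-trees on the same set $S$ of labels. If $\Upsilon(M_1)=\Upsilon(M_2)$, then $M_1\cong M_2$. In particular, $m(M_1,M_2)=\frac12|\Upsilon(M_1)\bigtriangleup\Upsilon(M_2)|$ is a metric on the class of all MUL-trees labeled in $S$.
   Context: A MUL-tree (multi-labeled phylogenetic tree) over a finite set $S$ is a finite rooted tree whose leaves are each labeled by a non-empty subset of $S$ (different leaves may share labels). Isomorphism of MUL-trees is isomorphism of rooted trees preserving leaf label sets. The height of a node is the largest length of a path from it to a leaf. The nested label $\ell(v)$ is defined inductively: if $v$ is a leaf with label set $S_v$, $\ell(v)=S_v$; otherwise $\ell(v)$ is the multiset $\{\ell(v_1),\dots,\ell(v_k)\}$ of the nested labels of its children $v_1,\dots,v_k$. $\Upsilon(M)$ is the multiset of nested labels of all nodes of $M$ (each with multiplicity the number of nodes having it); $\bigtriangleup$ is multiset symmetric difference (multiplicity $|M_1(x)-M_2(x)|$) and $|\cdot|$ is the sum of multiplicities. *)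

theory Defs
  imports Complex_Main "HOL-Library.Multiset"
begin

text \<open>MUL-trees: rooted trees represented with (ordered) child lists; the ordering is
  irrelevant, isomorphism below ignores it.\<close>
datatype 'a multree = Leaf "'a set" | Node "'a multree list"

fun mtree_wf :: "'a set \<Rightarrow> 'a multree \<Rightarrow> bool" where
  "mtree_wf S (Leaf A) = (A \<noteq> {} \<and> A \<subseteq> S)"
| "mtree_wf S (Node ts) = (ts \<noteq> [] \<and> (\<forall>t\<in>set ts. mtree_wf S t))"

inductive mtree_iso :: "'a multree \<Rightarrow> 'a multree \<Rightarrow> bool" where
  iso_leaf: "mtree_iso (Leaf A) (Leaf A)"
| iso_node: "mset us' = mset us \<Longrightarrow> list_all2 mtree_iso ts us' \<Longrightarrow> mtree_iso (Node ts) (Node us)"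

datatype 'a nlabel = NLeaf "'a set" | NNode "'a nlabel multiset"

fun nested_label :: "'a multree \<Rightarrow> 'a nlabel" where
  "nested_label (Leaf A) = NLeaf A"
| "nested_label (Node ts) = NNode (mset (map nested_label ts))"

fun Upsilon :: "'a multree \<Rightarrow> 'a nlabel multiset" where
  "Upsilon (Leaf A) = {# NLeaf A #}"
| "Upsilon (Node ts) = {# nested_label (Node ts) #} + sum_list (map Upsilon ts)"

definition msym_diff :: "'b multiset \<Rightarrow> 'b multiset \<Rightarrow> 'b multiset" where
  "msym_diff A B = (A - B) + (B - A)"

definition mul_dist :: "'a multree \<Rightarrow> 'a multree \<Rightarrow> real" where
  "mul_dist M1 M2 = real (size (msym_diff (Upsilon M1) (Upsilon M2))) / 2"

end

theory Submission imports Defs begin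

text \<open>The nested label of the root is the largest element of \<open>\<Upsilon>(M)\<close>: every other node
  has a nested label that occurs strictly inside it. Hence \<open>\<Upsilon>(M)\<close> determines \<open>\<ell>(root)\<close>,
  and \<open>\<ell>(root)\<close> determines \<open>M\<close> up to isomorphism, by induction, matching children with equal
  nested labels. Conversely isomorphic trees have equal \<open>\<Upsilon>\<close>, so \<open>m\<close> is half the size of a
  symmetric difference of multisets, which is a metric on multisets.\<close>

lemma size_less_NNode: "x \<in># M \<Longrightarrow> size x < size (NNode M)"
  by (auto dest!: multi_member_split)

lemma nested_label_in_Upsilon: "nested_label M \<in># Upsilon M"
  by (cases M) auto

lemma in_Upsilon_imp_root_or_smaller:
  "x \<in># Upsilon M \<Longrightarrow> x = nested_label M \<or> size x < size (nested_label M)"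
proof (induction M arbitrary: x)
  case (Leaf A)
  then show ?case by simp
next
  case (Node ts)
  show ?case
  proof (cases "x = nested_label (Node ts)")
    case False
    with Node.prems obtain t where t: "t \<in> set ts" "x \<in># Upsilon t" by auto
    have "nested_label t \<in># mset (map nested_label ts)"
      using t(1) by simp
    then have "size (nested_label t) < size (NNode (mset (map nested_label ts)))"
      by (rule size_less_NNode)
    with Node.IH[OF t] show ?thesis by auto
  qed simp
qed

lemma nested_label_eq_if_Upsilon_eq:
  "Upsilon M1 = Upsilon M2 \<Longrightarrow> nested_label M1 = nested_label M2"
  using in_Upsilon_imp_root_or_smaller[of "nested_label M1" M2]
    in_Upsilon_imp_root_or_smaller[of "nested_label M2" M1]
    nested_label_in_Upsilon[of M1] nested_label_in_Upsilon[of M2] by auto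

lemma list_all2_perm_if_mset_map_eq:
  assumes "\<forall>t\<in>set ts. \<forall>u. f t = f u \<longrightarrow> R t u"
    and "mset (map f ts) = mset (map f us)"
  shows "\<exists>us'. mset us' = mset us \<and> list_all2 R ts us'"
  using assms
proof (induction ts arbitrary: us)
  case Nil
  then show ?case by simp
next
  case (Cons t ts)
  have us: "mset (map f us) = add_mset (f t) (mset (map f ts))"
    using Cons.prems(2) by simp
  then have "f t \<in># mset (map f us)"
    by simp
  then obtain u where u: "u \<in> set us" "f u = f t"
    by auto
  have "mset (map f ts) = mset (map f us) - {#f u#}"
    unfolding us u(2) by simp
  also have "\<dots> = mset (map f (remove1 u us))"
    using u(1) by (simp add: image_mset_Diff)
  finally have "\<exists>us0. mset us0 = mset (remove1 u us) \<and> list_all2 R ts us0"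
    using Cons.prems(1) by (intro Cons.IH) simp_all
  then obtain us0 where "mset us0 = mset (remove1 u us)" "list_all2 R ts us0"
    by blast
  moreover have "R t u"
    using Cons.prems(1) u(2) by simp
  ultimately have "mset (u # us0) = mset us \<and> list_all2 R (t # ts) (u # us0)"
    using u(1) by simp
  then show ?case by blast
qed

lemma mtree_iso_if_nested_label_eq: "nested_label A = nested_label B \<Longrightarrow> mtree_iso A B"
proof (induction A arbitrary: B)
  case (Leaf A)
  then show ?case by (cases B) (auto intro: iso_leaf)
next
  case (Node ts)
  obtain us where B: "B = Node us"
    using Node.prems by (cases B) simp_all
  with Node.prems have "mset (map nested_label ts) = mset (map nested_label us)"
    by simp
  with Node.IH obtain us' where "mset us' = mset us" "list_all2 mtree_iso ts us'"
    using list_all2_perm_if_mset_map_eq[of ts nested_label mtree_iso us] by blast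
  then show ?case
    unfolding B by (rule iso_node)
qed

lemma sum_list_map_eq_if_mset_eq:
  fixes f :: "'a \<Rightarrow> 'b :: comm_monoid_add"
  shows "mset xs = mset ys \<Longrightarrow> sum_list (map f xs) = sum_list (map f ys)"
  by (metis mset_map sum_mset_sum_list)

lemma mtree_iso_imp_nested_label_Upsilon_eq:
  "mtree_iso A B \<Longrightarrow> nested_label A = nested_label B \<and> Upsilon A = Upsilon B"
proof (induction rule: mtree_iso.induct)
  case (iso_leaf A)
  then show ?case by simp
next
  case (iso_node us' us ts)
  have "map nested_label ts = map nested_label us'" "map Upsilon ts = map Upsilon us'"
    using iso_node.IH by (induction rule: list_all2_induct; simp)+
  moreover have "mset (map nested_label us') = mset (map nested_label us)"
    using iso_node.hyps(1) by (simp only: mset_map)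
  moreover have "sum_list (map Upsilon us') = sum_list (map Upsilon us)"
    using iso_node.hyps(1) by (rule sum_list_map_eq_if_mset_eq)
  ultimately show ?case by simp
qed

theorem mtree_iso_iff_Upsilon_eq: "mtree_iso A B \<longleftrightarrow> Upsilon A = Upsilon B"
  using mtree_iso_imp_nested_label_Upsilon_eq nested_label_eq_if_Upsilon_eq
    mtree_iso_if_nested_label_eq by blast

lemma msym_diff_commute: "msym_diff A B = msym_diff B A"
  by (simp add: msym_diff_def add.commute)

lemma msym_diff_empty_iff: "msym_diff A B = {#} \<longleftrightarrow> A = B"
proof -
  have "msym_diff A B = {#} \<longleftrightarrow> A \<subseteq># B \<and> B \<subseteq># A"
    by (simp add: msym_diff_def Diff_eq_empty_iff_mset)
  then show ?thesis
    by (auto intro: subset_mset.antisym)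
qed

lemma size_msym_diff_triangle:
  "size (msym_diff A C) \<le> size (msym_diff A B) + size (msym_diff B C)"
proof -
  have size_diff_triangle: "size (X - Z) \<le> size (X - Y) + size (Y - Z)" for X Y Z :: "'b multiset"
  proof -
    have "X - Z \<subseteq># (X - Y) + (Y - Z)"
      by (simp add: subseteq_mset_def) linarith
    then show ?thesis
      using size_mset_mono by fastforce
  qed
  show ?thesis
    using size_diff_triangle[of A C B] size_diff_triangle[of C A B]
    by (simp add: msym_diff_def)
qed

lemma mul_dist_nonneg: "mul_dist A B \<ge> 0"
  by (simp add: mul_dist_def)

lemma mul_dist_commute: "mul_dist A B = mul_dist B A"
  by (simp add: mul_dist_def msym_diff_commute)

lemma mul_dist_eq_0_iff: "mul_dist A B = 0 \<longleftrightarrow> mtree_iso A B"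
  by (simp add: mul_dist_def msym_diff_empty_iff mtree_iso_iff_Upsilon_eq)

lemma mul_dist_triangle: "mul_dist A C \<le> mul_dist A B + mul_dist B C"
proof -
  have "size (msym_diff (Upsilon A) (Upsilon C))
      \<le> size (msym_diff (Upsilon A) (Upsilon B)) + size (msym_diff (Upsilon B) (Upsilon C))"
    by (rule size_msym_diff_triangle)
  then show ?thesis
    unfolding mul_dist_def by linarith
qed

lemma mul_dist_cong_mtree_iso: "mtree_iso A A' \<Longrightarrow> mul_dist A B = mul_dist A' B"
  unfolding mul_dist_def mtree_iso_iff_Upsilon_eq by simp

theorem proposition6:
  fixes S :: "'a set" and M1 M2 :: "'a multree"
  assumes "finite S" and "mtree_wf S M1" and "mtree_wf S M2"
    and "Upsilon M1 = Upsilon M2"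
  shows "mtree_iso M1 M2 \<and>
    (\<forall>A A' B C. mtree_wf S A \<and> mtree_wf S A' \<and> mtree_wf S B \<and> mtree_wf S C \<longrightarrow>
        (mtree_iso A A' \<longrightarrow> mul_dist A B = mul_dist A' B)
      \<and> mul_dist A B \<ge> 0
      \<and> (mul_dist A B = 0 \<longleftrightarrow> mtree_iso A B)
      \<and> mul_dist A B = mul_dist B A
      \<and> mul_dist A C \<le> mul_dist A B + mul_dist B C)"
  using assms(4) mtree_iso_iff_Upsilon_eq mul_dist_cong_mtree_iso mul_dist_nonneg
    mul_dist_eq_0_iff mul_dist_commute mul_dist_triangle by blast

end
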